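(* Let $A=\begin{bmatrix}2&0\\0&0\end{bmatrix}$ and $B=\begin{bmatrix}0&1\\1&0\end{bmatrix}$. Let $M$ be any $\mathfrak{H}_2$-valued regular Borel measure on $[0,2]$ with $e^{tA+B}=\int_{[0,2]}e^{t\lambda}M(d\lambda)$ for all real $t$ (such a measure exists). Then $\frac{d}{dt}e^{tA+B}\big|_{t=0}=D:=\begin{bmatrix} e & \frac{e-e^{-1}}{2}\\ \frac{e-e^{-1}}{2} & e^{-1}\end{bmatrix}$, $D=\int_{[0,2]}\lambda\,M(d\lambda)$, $\det D=\frac{6-e^2-e^{-2}}{4}<0$, and consequently $M$ is not a non-negative measure.
   Context: $\mathfrak{H}_2$ is the set of $2\times 2$ Hermitian matrices. A matrix $S=(s_{pq})\in\mathfrak{M}_n$ is non-negative if $\sum_{p,q}s_{pq}\xi_p\overline{\xi_q}\ge 0$ for all $\xi\in\mathbb{C}^n$. A matrix-valued measure $M$ is non-negative if $M(\delta)$ is a non-negative matrix for every Borel set $\delta$. *)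

theory Defs
  imports "HOL-Analysis.Analysis"
begin

type_synonym cmat2 = "complex^2^2"

primrec mpow :: "cmat2 \<Rightarrow> nat \<Rightarrow> cmat2" where
  "mpow X 0 = mat 1"
| "mpow X (Suc k) = X ** mpow X k"

definition mexp :: "cmat2 \<Rightarrow> cmat2" where
  "mexp X = (\<Sum>k. (1 / fact k) *\<^sub>R mpow X k)"

definition hermitian2 :: "cmat2 \<Rightarrow> bool" where
  "hermitian2 S \<longleftrightarrow> (\<forall>i j. S $ i $ j = cnj (S $ j $ i))"

definition nonneg_mat :: "cmat2 \<Rightarrow> bool" where
  "nonneg_mat S \<longleftrightarrow> (\<forall>\<xi> :: complex^2.
     Im (\<Sum>p\<in>UNIV. \<Sum>q\<in>UNIV. S $ p $ q * \<xi> $ p * cnj (\<xi> $ q)) = 0 \<and>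
     Re (\<Sum>p\<in>UNIV. \<Sum>q\<in>UNIV. S $ p $ q * \<xi> $ p * cnj (\<xi> $ q)) \<ge> 0)"

definition borel02 :: "real set set" where
  "borel02 = {S. S \<in> sets borel \<and> S \<subseteq> {0..2}}"

definition H2_regular_borel_measure :: "(real set \<Rightarrow> cmat2) \<Rightarrow> bool" where
  "H2_regular_borel_measure M \<longleftrightarrow>
     (\<forall>S\<in>borel02. hermitian2 (M S)) \<and>
     M {} = 0 \<and>
     (\<forall>F :: nat \<Rightarrow> real set. range F \<subseteq> borel02 \<longrightarrow> disjoint_family F \<longrightarrow>
        (\<lambda>n. M (F n)) sums M (\<Union>n. F n)) \<and>
     (\<forall>S\<in>borel02. \<forall>\<epsilon>>0. \<exists>K U. compact K \<and> open U \<and> K \<subseteq> S \<and> S \<subseteq> U \<and>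
        (\<forall>E\<in>borel02. E \<subseteq> U - K \<longrightarrow> norm (M E) < \<epsilon>))"

definition nonneg_measure :: "(real set \<Rightarrow> cmat2) \<Rightarrow> bool" where
  "nonneg_measure M \<longleftrightarrow> (\<forall>S\<in>borel02. nonneg_mat (M S))"

definition tagged_borel_partition :: "real \<Rightarrow> (real set \<times> real) list \<Rightarrow> bool" where
  "tagged_borel_partition d P \<longleftrightarrow>
     (\<forall>(S, x)\<in>set P. S \<in> borel02 \<and> x \<in> S \<and> diameter S < d) \<and>
     (\<forall>i<length P. \<forall>j<length P. i \<noteq> j \<longrightarrow> fst (P ! i) \<inter> fst (P ! j) = {}) \<and>
     (\<Union>(fst ` set P)) = {0..2}"

definition has_mintegral :: "(real set \<Rightarrow> cmat2) \<Rightarrow> (real \<Rightarrow> real) \<Rightarrow> cmat2 \<Rightarrow> bool" where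
  "has_mintegral M f I \<longleftrightarrow>
     (\<forall>\<epsilon>>0. \<exists>d>0. \<forall>P. tagged_borel_partition d P \<longrightarrow>
        norm (sum_list (map (\<lambda>(S, x). f x *\<^sub>R M S) P) - I) < \<epsilon>)"

definition matA :: cmat2 where
  "matA = (\<chi> i j. if i = 1 \<and> j = 1 then 2 else 0)"

definition matB :: cmat2 where
  "matB = (\<chi> i j. if i \<noteq> j then 1 else 0)"

definition matD :: cmat2 where
  "matD = (\<chi> i j. if i = 1 \<and> j = 1 then complex_of_real (exp 1)
                   else if i = 2 \<and> j = 2 then complex_of_real (exp (-1))
                   else complex_of_real ((exp 1 - exp (-1)) / 2))"

end

theory Submission
  imports Defs
begin

(* The matrix X = tA + B satisfies X^2 = 2t X + I, with the distinct real eigenvalues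
   t +- sqrt(1 + t^2), so Sylvester's formula gives e^X in closed form and its derivative at
   t = 0 is D. A countably additive matrix-valued measure is bounded and hence of bounded
   variation, so Riemann sums against M depend continuously on the integrand in the uniform
   norm; since (e^(tx) - 1)/t tends to x uniformly on [0,2], differentiating the moment identity
   at t = 0 yields D as the integral of x. If M were non-negative, this integral would be a limit
   of non-negative combinations of non-negative matrices, hence non-negative; but a non-negative
   Hermitian 2x2 matrix with positive (1,1) entry has non-negative determinant, while det D < 0. *)

section \<open>The exponential of tA + B\<close>

lemma mpow_two_eigenvalues:
  fixes X :: cmat2 and a b :: real
  assumes char: "X ** X = (a + b) *\<^sub>R X - (a * b) *\<^sub>R mat 1" and "a \<noteq> b"
  shows "mpow X k = ((a * b ^ k - b * a ^ k) / (a - b)) *\<^sub>R mat 1 + ((a ^ k - b ^ k) / (a - b)) *\<^sub>R X"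
proof (induction k)
  case 0
  then show ?case
    using \<open>a \<noteq> b\<close> by simp
next
  case (Suc k)
  define c where "c = (a * b ^ k - b * a ^ k) / (a - b)"
  define d where "d = (a ^ k - b ^ k) / (a - b)"
  have "mpow X (Suc k) = c *\<^sub>R X + d *\<^sub>R (X ** X)"
    using Suc by (simp add: c_def d_def matrix_add_ldistrib matrix_scalar_ac scalar_matrix_assoc)
  also have "\<dots> = (- (a * b) * d) *\<^sub>R mat 1 + (c + (a + b) * d) *\<^sub>R X"
    unfolding char by (simp add: algebra_simps)
  also have "- (a * b) * d = (a * b ^ Suc k - b * a ^ Suc k) / (a - b)"
    by (simp add: d_def field_simps)
  also have "c + (a + b) * d = (a ^ Suc k - b ^ Suc k) / (a - b)"
    unfolding c_def d_def
    by (simp add: add_divide_distrib[symmetric] times_divide_eq_right[symmetric] algebra_simps)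
  finally show ?case .
qed

lemma mexp_two_eigenvalues:
  fixes X :: cmat2 and a b :: real
  assumes "X ** X = (a + b) *\<^sub>R X - (a * b) *\<^sub>R mat 1" and "a \<noteq> b"
  shows "mexp X = ((a * exp b - b * exp a) / (a - b)) *\<^sub>R mat 1 + ((exp a - exp b) / (a - b)) *\<^sub>R X"
proof -
  have exp_sums: "(\<lambda>k. x ^ k / fact k) sums exp x" for x :: real
    using exp_converges[of x] by (simp add: divide_inverse mult.commute)
  have "(\<lambda>k. ((a * (b ^ k / fact k) - b * (a ^ k / fact k)) / (a - b)) *\<^sub>R mat 1
           + (((a ^ k / fact k) - (b ^ k / fact k)) / (a - b)) *\<^sub>R X)
        sums (((a * exp b - b * exp a) / (a - b)) *\<^sub>R mat 1 + ((exp a - exp b) / (a - b)) *\<^sub>R X)"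
    by (intro sums_add sums_scaleR_left sums_divide sums_diff sums_mult exp_sums)
  then show ?thesis
    unfolding mexp_def mpow_two_eigenvalues[OF assms]
    by (simp add: sums_unique[symmetric] scaleR_add_right diff_divide_distrib mult.commute)
qed

definition eig_plus :: "real \<Rightarrow> real" where
  "eig_plus t = t + sqrt (1 + t\<^sup>2)"

definition eig_minus :: "real \<Rightarrow> real" where
  "eig_minus t = t - sqrt (1 + t\<^sup>2)"

lemma matA_matB_char_poly:
  "(t *\<^sub>R matA + matB) ** (t *\<^sub>R matA + matB)
     = (eig_plus t + eig_minus t) *\<^sub>R (t *\<^sub>R matA + matB) - (eig_plus t * eig_minus t) *\<^sub>R mat 1"
proof -
  have "eig_plus t * eig_minus t = t\<^sup>2 - (sqrt (1 + t\<^sup>2))\<^sup>2"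
    by (simp add: eig_plus_def eig_minus_def power2_eq_square algebra_simps)
  then have "eig_plus t * eig_minus t = -1"
    by simp
  then show ?thesis
    by (simp add: eig_plus_def eig_minus_def vec_eq_iff forall_2 matrix_matrix_mult_def sum_2
        matA_def matB_def mat_def complex_eq_iff)
qed

lemma mexp_matA_matB:
  "mexp (t *\<^sub>R matA + matB)
     = ((eig_plus t * exp (eig_minus t) - eig_minus t * exp (eig_plus t)) / (2 * sqrt (1 + t\<^sup>2)))
         *\<^sub>R mat 1
       + ((exp (eig_plus t) - exp (eig_minus t)) / (2 * sqrt (1 + t\<^sup>2)))
         *\<^sub>R (t *\<^sub>R matA + matB)"
proof -
  have "eig_plus t - eig_minus t = 2 * sqrt (1 + t\<^sup>2)"
    by (simp add: eig_plus_def eig_minus_def)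
  moreover have "eig_plus t \<noteq> eig_minus t"
    using add_pos_nonneg[of 1 "t\<^sup>2"] by (simp add: eig_plus_def eig_minus_def)
  ultimately show ?thesis
    using mexp_two_eigenvalues[OF matA_matB_char_poly] by metis
qed

lemma mexp_matA_matB_has_derivative_0:
  "((\<lambda>t::real. mexp (t *\<^sub>R matA + matB)) has_vector_derivative matD) (at 0)"
proof -
  define r where "r t = sqrt (1 + t\<^sup>2)" for t :: real
  define \<alpha> where
    "\<alpha> t = (eig_plus t * exp (eig_minus t) - eig_minus t * exp (eig_plus t)) / (2 * r t)" for t
  define \<beta> where "\<beta> t = (exp (eig_plus t) - exp (eig_minus t)) / (2 * r t)" for t
  have r: "(r has_real_derivative 0) (at 0)"
    unfolding r_def by (auto intro!: derivative_eq_intros)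
  have p: "(eig_plus has_real_derivative 1) (at 0)"
    and m: "(eig_minus has_real_derivative 1) (at 0)"
    using r unfolding eig_plus_def[abs_def] eig_minus_def[abs_def] r_def[symmetric]
    by (auto intro!: derivative_eq_intros)
  have at0: "r 0 = 1" "eig_plus 0 = 1" "eig_minus 0 = -1"
    by (simp_all add: r_def eig_plus_def eig_minus_def)
  have \<alpha>: "(\<alpha> has_real_derivative exp (-1)) (at 0)"
    unfolding \<alpha>_def[abs_def] using p m r
    by (auto intro!: derivative_eq_intros simp: at0 field_simps exp_minus)
  have \<beta>: "(\<beta> has_real_derivative ((exp 1 - exp (-1)) / 2)) (at 0)"
    unfolding \<beta>_def[abs_def] using p m r
    by (auto intro!: derivative_eq_intros simp: at0 field_simps exp_minus)
  have "((\<lambda>t. \<alpha> t *\<^sub>R mat 1 + \<beta> t *\<^sub>R (t *\<^sub>R matA + matB)) has_vector_derivative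
         exp (-1) *\<^sub>R mat 1 + (\<beta> 0 *\<^sub>R matA + ((exp 1 - exp (-1)) / 2) *\<^sub>R matB)) (at 0)"
    using has_vector_derivative_scaleR[OF \<beta> has_vector_derivative_add[OF
        has_vector_derivative_scaleR[OF DERIV_ident has_vector_derivative_const]
        has_vector_derivative_const]]
      has_vector_derivative_scaleR[OF \<alpha> has_vector_derivative_const]
    by (auto intro!: has_vector_derivative_add)
  moreover have "exp (-1) *\<^sub>R mat 1 + (\<beta> 0 *\<^sub>R matA + ((exp 1 - exp (-1)) / 2) *\<^sub>R matB) = matD"
    by (simp add: \<beta>_def at0 vec_eq_iff forall_2 matA_def matB_def mat_def matD_def complex_eq_iff
        field_simps)
  ultimately show ?thesis
    unfolding mexp_matA_matB \<alpha>_def \<beta>_def r_def by simp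
qed

section \<open>Countably additive set functions on the Borel subsets of [0,2]\<close>

definition countably_additive_borel02 :: "(real set \<Rightarrow> 'a::real_normed_vector) \<Rightarrow> bool" where
  "countably_additive_borel02 M \<longleftrightarrow> M {} = 0 \<and>
     (\<forall>F :: nat \<Rightarrow> real set. range F \<subseteq> borel02 \<longrightarrow> disjoint_family F \<longrightarrow>
        (\<lambda>n. M (F n)) sums M (\<Union>n. F n))"

lemma H2_regular_borel_measure_countably_additive:
  "H2_regular_borel_measure M \<Longrightarrow> countably_additive_borel02 M"
  unfolding H2_regular_borel_measure_def countably_additive_borel02_def by blast

lemma borel02_Int: "A \<in> borel02 \<Longrightarrow> B \<in> borel02 \<Longrightarrow> A \<inter> B \<in> borel02"
  and borel02_Diff: "A \<in> borel02 \<Longrightarrow> B \<in> borel02 \<Longrightarrow> A - B \<in> borel02"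
  and borel02_UN: "finite J \<Longrightarrow> S ` J \<subseteq> borel02 \<Longrightarrow> (\<Union>i\<in>J. S i) \<in> borel02"
  by (auto simp: borel02_def)

lemma countably_additive_borel02_finite:
  fixes S :: "nat \<Rightarrow> real set"
  assumes M: "countably_additive_borel02 M" and "finite J"
    and S: "S ` J \<subseteq> borel02" and disj: "disjoint_family_on S J"
  shows "M (\<Union>i\<in>J. S i) = (\<Sum>i\<in>J. M (S i))"
proof -
  define F where "F i = (if i \<in> J then S i else {})" for i
  have "range F \<subseteq> borel02"
    using S by (auto simp: F_def borel02_def image_subset_iff)
  moreover have "disjoint_family F"
    using disj by (auto simp: F_def disjoint_family_on_def)
  ultimately have "(\<lambda>i. M (F i)) sums M (\<Union>i. F i)"
    using M by (simp add: countably_additive_borel02_def)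
  moreover have "(\<lambda>i. M (F i)) sums (\<Sum>i\<in>J. M (F i))"
    using M by (intro sums_finite[OF \<open>finite J\<close>]) (simp add: F_def countably_additive_borel02_def)
  ultimately have "M (\<Union>i. F i) = (\<Sum>i\<in>J. M (F i))"
    using sums_unique2 by blast
  moreover have "(\<Union>i. F i) = (\<Union>i\<in>J. S i)"
    by (auto simp: F_def split: if_splits)
  moreover have "(\<Sum>i\<in>J. M (F i)) = (\<Sum>i\<in>J. M (S i))"
    by (simp add: F_def)
  ultimately show ?thesis
    by simp
qed

lemma countably_additive_borel02_Diff:
  assumes M: "countably_additive_borel02 M" and "E \<in> borel02" "G \<in> borel02" "G \<subseteq> E"
  shows "M E = M G + M (E - G)"
proof -
  define S where "S i = (if i = (0::nat) then G else E - G)" for i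
  have "S ` {0, 1} \<subseteq> borel02"
    using assms by (simp add: S_def borel02_Diff)
  moreover have "disjoint_family_on S {0, 1}"
    by (auto simp: S_def disjoint_family_on_def)
  ultimately have "M (\<Union>i\<in>{0, 1}. S i) = (\<Sum>i\<in>{0, 1}. M (S i))"
    by (intro countably_additive_borel02_finite[OF M]) auto
  moreover have "(\<Union>i\<in>{0, 1}. S i) = E"
    using \<open>G \<subseteq> E\<close> by (auto simp: S_def)
  ultimately show ?thesis
    by (simp add: S_def)
qed

lemma countably_additive_borel02_bounded_Un:
  assumes M: "countably_additive_borel02 M" and "G \<in> borel02"
    and "bounded (M ` (Pow G \<inter> borel02))" "bounded (M ` (Pow (E - G) \<inter> borel02))"
  shows "bounded (M ` (Pow E \<inter> borel02))"
proof -
  obtain B1 where B1: "\<And>F. F \<in> Pow G \<inter> borel02 \<Longrightarrow> norm (M F) \<le> B1"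
    using assms(3) unfolding bounded_iff by (metis imageI)
  obtain B2 where B2: "\<And>F. F \<in> Pow (E - G) \<inter> borel02 \<Longrightarrow> norm (M F) \<le> B2"
    using assms(4) unfolding bounded_iff by (metis imageI)
  have "norm (M F) \<le> B1 + B2" if "F \<in> Pow E \<inter> borel02" for F
  proof -
    have "M F = M (F \<inter> G) + M (F - F \<inter> G)"
      using that \<open>G \<in> borel02\<close>
      by (intro countably_additive_borel02_Diff[OF M]) (auto intro: borel02_Int)
    moreover have "F - F \<inter> G = F - G"
      by blast
    ultimately have "norm (M F) \<le> norm (M (F \<inter> G)) + norm (M (F - G))"
      by (simp add: norm_triangle_ineq)
    also have "\<dots> \<le> B1 + B2"
      using that \<open>G \<in> borel02\<close> by (intro add_mono B1 B2) (auto intro: borel02_Int borel02_Diff)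
    finally show ?thesis .
  qed
  then show ?thesis
    unfolding bounded_iff by blast
qed

lemma countably_additive_borel02_split_unbounded:
  assumes M: "countably_additive_borel02 M" and E: "E \<in> borel02"
    and unbounded: "\<not> bounded (M ` (Pow E \<inter> borel02))"
  shows "\<exists>F. F \<in> borel02 \<and> F \<subseteq> E \<and> 1 \<le> norm (M F) \<and>
    \<not> bounded (M ` (Pow (E - F) \<inter> borel02))"
proof -
  obtain G where G: "G \<in> borel02" "G \<subseteq> E" "norm (M E) + 1 < norm (M G)"
    using unbounded unfolding bounded_iff by (auto simp: not_le)
  have "M E = M G + M (E - G)"
    using M E G by (intro countably_additive_borel02_Diff)
  then have "norm (M G) \<le> norm (M E) + norm (M (E - G))"
    using norm_triangle_ineq4[of "M E" "M (E - G)"] by simp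
  then have EG: "1 \<le> norm (M (E - G))" and "1 \<le> norm (M G)"
    using G(3) norm_ge_zero[of "M E"] by linarith+
  show ?thesis
  proof (cases "bounded (M ` (Pow G \<inter> borel02))")
    case True
    then have "\<not> bounded (M ` (Pow (E - G) \<inter> borel02))"
      using countably_additive_borel02_bounded_Un[OF M G(1)] unbounded by blast
    then show ?thesis
      using G \<open>1 \<le> norm (M G)\<close> by blast
  next
    case False
    moreover have "E - (E - G) = G"
      using G(2) by blast
    ultimately show ?thesis
      using EG E G(1) by (metis Diff_subset borel02_Diff)
  qed
qed

lemma disjoint_family_peeling:
  assumes sub: "\<And>n. F n \<subseteq> E n" and peel: "\<And>n. E (Suc n) = E n - F n"
  shows "disjoint_family F"
proof -
  have "decseq E"
    by (rule decseq_SucI) (auto simp: peel)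
  have "F m \<inter> F n = {}" if "m < n" for m n
  proof -
    have "F n \<subseteq> E (Suc m)"
      using sub[of n] decseqD[OF \<open>decseq E\<close>, of "Suc m" n] that by auto
    then show ?thesis
      by (auto simp: peel)
  qed
  then show ?thesis
    unfolding disjoint_family_on_def by (metis Int_commute linorder_neqE_nat)
qed

(* If M were unbounded, one could split off, again and again, a piece of norm at least 1 while
   keeping an unbounded remainder; the pieces are disjoint, so their measures would have to tend
   to 0. *)
lemma countably_additive_borel02_bounded:
  assumes M: "countably_additive_borel02 M"
  shows "bounded (M ` borel02)"
proof (rule ccontr)
  assume "\<not> bounded (M ` borel02)"
  moreover have "Pow {0..2} \<inter> borel02 = borel02"
    by (auto simp: borel02_def)
  ultimately have unbounded02: "\<not> bounded (M ` (Pow {0..2} \<inter> borel02))"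
    by simp
  obtain f where f: "\<And>E. E \<in> borel02 \<Longrightarrow> \<not> bounded (M ` (Pow E \<inter> borel02)) \<Longrightarrow>
      f E \<in> borel02 \<and> f E \<subseteq> E \<and> 1 \<le> norm (M (f E)) \<and> \<not> bounded (M ` (Pow (E - f E) \<inter> borel02))"
    using countably_additive_borel02_split_unbounded[OF M] by metis
  define Es where "Es n = ((\<lambda>E. E - f E) ^^ n) {0..2}" for n
  have Es: "Es n \<in> borel02 \<and> \<not> bounded (M ` (Pow (Es n) \<inter> borel02))" for n
  proof (induction n)
    case 0
    then show ?case
      using unbounded02 by (simp add: Es_def borel02_def)
  next
    case (Suc n)
    then show ?case
      using f[of "Es n"] by (simp add: Es_def borel02_Diff)
  qed
  define F where "F n = f (Es n)" for n
  have F: "F n \<in> borel02" "F n \<subseteq> Es n" "1 \<le> norm (M (F n))" for n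
    using f Es by (simp_all add: F_def)
  have "disjoint_family F"
    using F(2) by (rule disjoint_family_peeling) (simp add: Es_def F_def)
  then have "(\<lambda>n. M (F n)) sums M (\<Union>n. F n)"
    using M F(1) by (auto simp: countably_additive_borel02_def)
  then have "(\<lambda>n. M (F n)) \<longlonglongrightarrow> 0"
    using summable_LIMSEQ_zero sums_summable by blast
  then obtain n where "norm (M (F n)) < 1"
    using LIMSEQ_D[of _ 0 1] by auto
  with F(3) show False
    by (simp add: not_le[symmetric])
qed

lemma sum_abs_le_twice_subsum_bound:
  fixes g :: "'i \<Rightarrow> real"
  assumes "finite J" and bound: "\<And>J'. J' \<subseteq> J \<Longrightarrow> \<bar>\<Sum>i\<in>J'. g i\<bar> \<le> B"
  shows "(\<Sum>i\<in>J. \<bar>g i\<bar>) \<le> 2 * B"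
proof -
  have "(\<Sum>i\<in>J. \<bar>g i\<bar>) = (\<Sum>i\<in>J. if 0 \<le> g i then g i else - g i)"
    by (intro sum.cong) auto
  also have "\<dots> = (\<Sum>i\<in>J \<inter> {i. 0 \<le> g i}. g i) - (\<Sum>i\<in>J \<inter> - {i. 0 \<le> g i}. g i)"
    using \<open>finite J\<close> by (simp add: sum.If_cases sum_negf)
  also have "\<dots> \<le> B + B"
    using bound[of "J \<inter> {i. 0 \<le> g i}"] bound[of "J \<inter> - {i. 0 \<le> g i}"] by auto
  finally show ?thesis
    by simp
qed

definition variation_bounded02 :: "(real set \<Rightarrow> 'a::real_normed_vector) \<Rightarrow> real \<Rightarrow> bool" where
  "variation_bounded02 M K \<longleftrightarrow> (\<forall>(J :: nat set) S. finite J \<longrightarrow> S ` J \<subseteq> borel02 \<longrightarrow>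
     disjoint_family_on S J \<longrightarrow> (\<Sum>i\<in>J. norm (M (S i))) \<le> K)"

lemma countably_additive_borel02_variation_bounded:
  fixes M :: "real set \<Rightarrow> 'a::euclidean_space"
  assumes M: "countably_additive_borel02 M"
  obtains K where "variation_bounded02 M K"
proof -
  obtain B where B: "\<And>E. E \<in> borel02 \<Longrightarrow> norm (M E) \<le> B"
    using countably_additive_borel02_bounded[OF M] unfolding bounded_iff by (metis imageI)
  have "(\<Sum>i\<in>J. norm (M (S i))) \<le> DIM('a) * (2 * B)"
    if J: "finite J" "S ` J \<subseteq> borel02" "disjoint_family_on S J" for J :: "nat set" and S
  proof -
    have component: "(\<Sum>i\<in>J. \<bar>M (S i) \<bullet> b\<bar>) \<le> 2 * B" if "b \<in> Basis" for b
    proof (rule sum_abs_le_twice_subsum_bound[OF \<open>finite J\<close>])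
      fix J' assume "J' \<subseteq> J"
      then have "finite J'" "S ` J' \<subseteq> borel02" "disjoint_family_on S J'"
        using J by (auto intro: finite_subset disjoint_family_on_mono)
      then have "(\<Sum>i\<in>J'. M (S i) \<bullet> b) = M (\<Union>i\<in>J'. S i) \<bullet> b"
        by (simp add: countably_additive_borel02_finite[OF M] inner_sum_left)
      also have "\<bar>\<dots>\<bar> \<le> B"
        using Basis_le_norm[OF \<open>b \<in> Basis\<close>] B[OF borel02_UN] \<open>finite J'\<close> \<open>S ` J' \<subseteq> borel02\<close>
        by (meson order_trans)
      finally show "\<bar>\<Sum>i\<in>J'. M (S i) \<bullet> b\<bar> \<le> B" .
    qed
    have "(\<Sum>i\<in>J. norm (M (S i))) \<le> (\<Sum>i\<in>J. \<Sum>b\<in>Basis. \<bar>M (S i) \<bullet> b\<bar>)"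
      by (intro sum_mono norm_le_l1)
    also have "\<dots> = (\<Sum>b\<in>Basis. \<Sum>i\<in>J. \<bar>M (S i) \<bullet> b\<bar>)"
      by (rule sum.swap)
    also have "\<dots> \<le> (\<Sum>b\<in>(Basis :: 'a set). 2 * B)"
      by (intro sum_mono component)
    finally show ?thesis
      by simp
  qed
  then show thesis
    using that unfolding variation_bounded02_def by blast
qed

section \<open>Integrals against a matrix-valued measure\<close>

definition riemann_sum ::
    "(real set \<Rightarrow> 'a::real_normed_vector) \<Rightarrow> (real \<Rightarrow> real) \<Rightarrow> (real set \<times> real) list \<Rightarrow> 'a" where
  "riemann_sum M f P = (\<Sum>(S, x)\<leftarrow>P. f x *\<^sub>R M S)"

lemma has_mintegral_iff_riemann_sum:
  "has_mintegral M f I \<longleftrightarrow>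
     (\<forall>\<epsilon>>0. \<exists>d>0. \<forall>P. tagged_borel_partition d P \<longrightarrow> norm (riemann_sum M f P - I) < \<epsilon>)"
  unfolding has_mintegral_def riemann_sum_def ..

lemma riemann_sum_diff: "riemann_sum M (\<lambda>x. f x - g x) P = riemann_sum M f P - riemann_sum M g P"
  by (induction P) (auto simp: riemann_sum_def scaleR_diff_left)

lemma riemann_sum_scale: "riemann_sum M (\<lambda>x. c * f x) P = c *\<^sub>R riemann_sum M f P"
  by (induction P) (auto simp: riemann_sum_def scaleR_add_right)

lemma riemann_sum_conv_sum_nth:
  "riemann_sum M f P = (\<Sum>i<length P. f (snd (P ! i)) *\<^sub>R M (fst (P ! i)))"
  unfolding riemann_sum_def sum_list_sum_nth by (simp add: case_prod_beta atLeast0LessThan)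

lemma tagged_borel_partition_mono:
  "tagged_borel_partition d P \<Longrightarrow> d \<le> d' \<Longrightarrow> tagged_borel_partition d' P"
  unfolding tagged_borel_partition_def by fastforce

lemma variation_bounded02_nonneg: "variation_bounded02 M K \<Longrightarrow> 0 \<le> K"
  unfolding variation_bounded02_def disjoint_family_on_def
  by (metis empty_iff empty_subsetI finite.emptyI image_empty sum.empty)

lemma riemann_sum_norm_le:
  assumes K: "variation_bounded02 M K" and P: "tagged_borel_partition d P"
    and f: "\<And>x. x \<in> {0..2} \<Longrightarrow> \<bar>f x\<bar> \<le> c"
  shows "norm (riemann_sum M f P) \<le> c * K"
proof -
  have mem: "fst (P ! i) \<in> borel02" "snd (P ! i) \<in> {0..2}" if "i < length P" for i
  proof -
    have "fst (P ! i) \<in> borel02 \<and> snd (P ! i) \<in> fst (P ! i)"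
      using P nth_mem[OF that] unfolding tagged_borel_partition_def by (auto simp: case_prod_beta)
    then show "fst (P ! i) \<in> borel02" "snd (P ! i) \<in> {0..2}"
      by (auto simp: borel02_def)
  qed
  have "norm (riemann_sum M f P) \<le> (\<Sum>i<length P. \<bar>f (snd (P ! i))\<bar> * norm (M (fst (P ! i))))"
    unfolding riemann_sum_conv_sum_nth by (rule norm_sum[THEN order_trans]) simp
  also have "\<dots> \<le> (\<Sum>i<length P. c * norm (M (fst (P ! i))))"
    using mem f by (intro sum_mono mult_right_mono) auto
  also have "\<dots> = c * (\<Sum>i<length P. norm (M (fst (P ! i))))"
    by (simp add: sum_distrib_left)
  also have "\<dots> \<le> c * K"
  proof (rule mult_left_mono)
    show "(\<Sum>i<length P. norm (M (fst (P ! i)))) \<le> K"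
      using K P mem
      unfolding variation_bounded02_def tagged_borel_partition_def disjoint_family_on_def
      by (auto simp: image_subset_iff)
    show "0 \<le> c"
      using f[of 0] by simp
  qed
  finally show ?thesis .
qed

lemma has_mintegral_diff:
  assumes f: "has_mintegral M f I" and g: "has_mintegral M g J"
  shows "has_mintegral M (\<lambda>x. f x - g x) (I - J)"
  unfolding has_mintegral_iff_riemann_sum
proof (intro allI impI)
  fix \<epsilon> :: real assume "\<epsilon> > 0"
  then obtain d1 d2 where "d1 > 0" "d2 > 0"
    and d1: "\<And>P. tagged_borel_partition d1 P \<Longrightarrow> norm (riemann_sum M f P - I) < \<epsilon> / 2"
    and d2: "\<And>P. tagged_borel_partition d2 P \<Longrightarrow> norm (riemann_sum M g P - J) < \<epsilon> / 2"
    using f g half_gt_zero unfolding has_mintegral_iff_riemann_sum by metis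
  have "norm (riemann_sum M (\<lambda>x. f x - g x) P - (I - J)) < \<epsilon>"
    if "tagged_borel_partition (min d1 d2) P" for P
  proof -
    have "norm (riemann_sum M (\<lambda>x. f x - g x) P - (I - J))
        \<le> norm (riemann_sum M f P - I) + norm (riemann_sum M g P - J)"
      using norm_triangle_ineq4[of "riemann_sum M f P - I" "riemann_sum M g P - J"]
      by (simp add: riemann_sum_diff algebra_simps)
    also have "\<dots> < \<epsilon> / 2 + \<epsilon> / 2"
      using that by (intro add_strict_mono d1 d2) (auto elim: tagged_borel_partition_mono)
    finally show ?thesis
      by simp
  qed
  then show "\<exists>d>0. \<forall>P. tagged_borel_partition d P \<longrightarrow>
      norm (riemann_sum M (\<lambda>x. f x - g x) P - (I - J)) < \<epsilon>"
    using \<open>d1 > 0\<close> \<open>d2 > 0\<close> by (intro exI[of _ "min d1 d2"]) auto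
qed

lemma has_mintegral_scale:
  assumes f: "has_mintegral M f I"
  shows "has_mintegral M (\<lambda>x. c * f x) (c *\<^sub>R I)"
  unfolding has_mintegral_iff_riemann_sum
proof (intro allI impI)
  fix \<epsilon> :: real assume "\<epsilon> > 0"
  then have "\<epsilon> / (\<bar>c\<bar> + 1) > 0"
    by (simp add: add_pos_nonneg)
  then obtain d where "d > 0"
    and d: "\<And>P. tagged_borel_partition d P \<Longrightarrow> norm (riemann_sum M f P - I) < \<epsilon> / (\<bar>c\<bar> + 1)"
    using f unfolding has_mintegral_iff_riemann_sum by blast
  have "norm (riemann_sum M (\<lambda>x. c * f x) P - c *\<^sub>R I) < \<epsilon>" if "tagged_borel_partition d P" for P
  proof -
    have "norm (riemann_sum M (\<lambda>x. c * f x) P - c *\<^sub>R I) = \<bar>c\<bar> * norm (riemann_sum M f P - I)"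
      by (simp add: riemann_sum_scale flip: scaleR_diff_right)
    also have "\<dots> \<le> \<bar>c\<bar> * (\<epsilon> / (\<bar>c\<bar> + 1))"
      using d[OF that] by (intro mult_left_mono) auto
    also have "\<dots> < \<epsilon>"
      using \<open>\<epsilon> > 0\<close> by (simp add: field_simps)
    finally show ?thesis .
  qed
  then show "\<exists>d>0. \<forall>P. tagged_borel_partition d P \<longrightarrow>
      norm (riemann_sum M (\<lambda>x. c * f x) P - c *\<^sub>R I) < \<epsilon>"
    using \<open>d > 0\<close> by blast
qed

lemma has_mintegral_uniform_approx:
  assumes K: "variation_bounded02 M K"
    and approx: "\<And>\<epsilon>. \<epsilon> > 0 \<Longrightarrow>
      \<exists>g J. has_mintegral M g J \<and> (\<forall>x\<in>{0..2}. \<bar>f x - g x\<bar> \<le> \<epsilon>) \<and> norm (J - I) \<le> \<epsilon>"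
  shows "has_mintegral M f I"
  unfolding has_mintegral_iff_riemann_sum
proof (intro allI impI)
  fix \<epsilon> :: real assume "\<epsilon> > 0"
  have "0 \<le> K"
    using K by (rule variation_bounded02_nonneg)
  define \<eta> where "\<eta> = \<epsilon> / (K + 3)"
  have "\<eta> > 0" and "\<eta> * (K + 2) < \<epsilon>"
    using \<open>0 \<le> K\<close> \<open>\<epsilon> > 0\<close> by (simp_all add: \<eta>_def field_simps)
  obtain g J where g: "has_mintegral M g J" and fg: "\<forall>x\<in>{0..2}. \<bar>f x - g x\<bar> \<le> \<eta>"
    and J: "norm (J - I) \<le> \<eta>"
    using approx[OF \<open>\<eta> > 0\<close>] by blast
  obtain d where "d > 0"
    and d: "\<And>P. tagged_borel_partition d P \<Longrightarrow> norm (riemann_sum M g P - J) < \<eta>"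
    using g \<open>\<eta> > 0\<close> unfolding has_mintegral_iff_riemann_sum by blast
  have "norm (riemann_sum M f P - I) < \<epsilon>" if P: "tagged_borel_partition d P" for P
  proof -
    have "riemann_sum M f P - I
        = riemann_sum M (\<lambda>x. f x - g x) P + (riemann_sum M g P - J) + (J - I)"
      by (simp add: riemann_sum_diff)
    also have "norm \<dots>
        \<le> norm (riemann_sum M (\<lambda>x. f x - g x) P) + norm (riemann_sum M g P - J) + norm (J - I)"
      by (intro norm_triangle_le add_mono norm_triangle_ineq order_refl)
    also have "\<dots> < \<eta> * K + \<eta> + \<eta>"
      using riemann_sum_norm_le[OF K P, of "\<lambda>x. f x - g x" \<eta>] fg d[OF P] J by auto
    also have "\<dots> < \<epsilon>"
      using \<open>\<eta> * (K + 2) < \<epsilon>\<close> by (simp add: algebra_simps)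
    finally show ?thesis .
  qed
  then show "\<exists>d>0. \<forall>P. tagged_borel_partition d P \<longrightarrow> norm (riemann_sum M f P - I) < \<epsilon>"
    using \<open>d > 0\<close> by blast
qed

lemma exp_difference_quotient_bound:
  fixes t x :: real
  assumes "0 < t" "0 \<le> t * x" "t * x \<le> 1"
  shows "\<bar>(exp (t * x) - 1) / t - x\<bar> \<le> t * x\<^sup>2"
proof -
  have "0 \<le> exp (t * x) - 1 - t * x" "exp (t * x) - 1 - t * x \<le> (t * x)\<^sup>2"
    using exp_ge_add_one_self[of "t * x"] exp_bound[OF assms(2,3)] by linarith+
  moreover have "(exp (t * x) - 1) / t - x = (exp (t * x) - 1 - t * x) / t"
    using \<open>0 < t\<close> by (simp add: field_simps)
  ultimately have "\<bar>(exp (t * x) - 1) / t - x\<bar> \<le> (t * x)\<^sup>2 / t"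
    using \<open>0 < t\<close> by (simp add: divide_right_mono)
  also have "\<dots> = t * x\<^sup>2"
    using \<open>0 < t\<close> by (simp add: power2_eq_square)
  finally show ?thesis .
qed

lemma has_mintegral_id_from_exp_derivative:
  assumes K: "variation_bounded02 M K"
    and exp: "\<And>t. has_mintegral M (\<lambda>x. exp (t * x)) (E t)"
    and der: "(E has_vector_derivative D) (at 0)"
  shows "has_mintegral M (\<lambda>x. x) D"
proof (rule has_mintegral_uniform_approx[OF K])
  fix \<epsilon> :: real assume "\<epsilon> > 0"
  have "\<forall>e>0. \<exists>\<delta>>0. \<forall>t. 0 < norm (t - 0) \<and> norm (t - 0) < \<delta> \<longrightarrow>
      norm (E t - E 0 - (t - 0) *\<^sub>R D) / norm (t - 0) < e"
    using der unfolding has_vector_derivative_def has_derivative_at' by (rule conjunct2)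
  then obtain \<delta> where "\<delta> > 0"
    and \<delta>: "\<And>t. 0 < \<bar>t\<bar> \<Longrightarrow> \<bar>t\<bar> < \<delta> \<Longrightarrow> norm (E t - E 0 - t *\<^sub>R D) / \<bar>t\<bar> < \<epsilon>"
    using \<open>\<epsilon> > 0\<close> by force
  define t where "t = min (\<delta> / 2) (min (1 / 2) (\<epsilon> / 4))"
  have t: "0 < t" "t < \<delta>" "t \<le> 1 / 2" "4 * t \<le> \<epsilon>"
    using \<open>\<delta> > 0\<close> \<open>\<epsilon> > 0\<close> by (auto simp: t_def)
  have "has_mintegral M (\<lambda>x. (1 / t) * (exp (t * x) - exp (0 * x))) ((1 / t) *\<^sub>R (E t - E 0))"
    by (intro has_mintegral_scale has_mintegral_diff exp)
  moreover have "\<bar>x - (1 / t) * (exp (t * x) - exp (0 * x))\<bar> \<le> \<epsilon>" if "x \<in> {0..2}" for x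
  proof -
    have "t * x \<le> 1 / 2 * 2"
      using t that by (intro mult_mono) auto
    then have "\<bar>(exp (t * x) - 1) / t - x\<bar> \<le> t * x\<^sup>2"
      using t that by (intro exp_difference_quotient_bound) auto
    also have "\<dots> \<le> t * 2\<^sup>2"
      using t that by (intro mult_left_mono power_mono) auto
    finally show ?thesis
      using t by (simp add: abs_minus_commute)
  qed
  moreover have "norm ((1 / t) *\<^sub>R (E t - E 0) - D) \<le> \<epsilon>"
  proof -
    have "(1 / t) *\<^sub>R (E t - E 0) - D = (1 / t) *\<^sub>R (E t - E 0 - t *\<^sub>R D)"
      using t by (simp add: algebra_simps)
    then show ?thesis
      using \<delta>[of t] t by simp
  qed
  ultimately show
    "\<exists>g J. has_mintegral M g J \<and> (\<forall>x\<in>{0..2}. \<bar>x - g x\<bar> \<le> \<epsilon>) \<and> norm (J - D) \<le> \<epsilon>"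
    by blast
qed

(* has_mintegral quantifies over all fine tagged partitions, so without this lemma it would hold
   vacuously for every value. *)
lemma tagged_borel_partition_exists:
  assumes "d > 0"
  shows "\<exists>P. tagged_borel_partition d P"
proof -
  obtain N :: nat where N: "2 / d < real N"
    using reals_Archimedean2 by blast
  moreover have "0 < 2 / d"
    using \<open>d > 0\<close> by simp
  ultimately have "0 < real N"
    by linarith
  define h where "h = 2 / real N"
  have "h > 0" "h < d" "real N * h = 2"
    using N \<open>0 < real N\<close> \<open>d > 0\<close> by (auto simp: h_def field_simps)
  define I where "I k = {real k * h ..< real (Suc k) * h} \<inter> {0..2}" for k
  define P where "P = map (\<lambda>k. (I k, real k * h)) [0..<Suc N]"
  have cell: "I k \<in> borel02 \<and> real k * h \<in> I k \<and> diameter (I k) < d" if "k \<le> N" for k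
  proof -
    have "real k * h \<le> real N * h"
      using that \<open>h > 0\<close> by (intro mult_right_mono) auto
    then have "real k * h \<le> 2"
      using \<open>real N * h = 2\<close> by simp
    then have "real k * h \<in> I k"
      using \<open>h > 0\<close> by (simp add: I_def distrib_right)
    moreover have "diameter (I k) \<le> diameter {real k * h .. real (Suc k) * h}"
      by (rule diameter_subset) (auto simp: I_def)
    moreover have "I k \<in> borel02"
      by (auto simp: I_def borel02_def)
    ultimately show ?thesis
      using \<open>h > 0\<close> \<open>h < d\<close> by (simp add: algebra_simps)
  qed
  have disjoint: "I i \<inter> I j = {}" if "i < j" for i j
  proof -
    have "real (Suc i) * h \<le> real j * h"
      using that \<open>h > 0\<close> by (intro mult_right_mono) auto
    then show ?thesis
      by (auto simp: I_def)
  qed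
  have cover: "\<exists>k\<in>{0..<Suc N}. y \<in> I k" if "y \<in> {0..2}" for y
  proof -
    define k where "k = nat \<lfloor>y / h\<rfloor>"
    have "0 \<le> y / h" "y / h \<le> real N"
      using that \<open>h > 0\<close> \<open>real N * h = 2\<close> by (auto simp: field_simps)
    then have "real k \<le> y / h" "y / h < real k + 1" "k \<le> N"
      unfolding k_def by linarith+
    then have "real k * h \<le> y" "y < real (Suc k) * h"
      using \<open>h > 0\<close> by (simp_all add: field_simps)
    then show ?thesis
      using that \<open>k \<le> N\<close> by (auto simp: I_def)
  qed
  have set_P: "set P = (\<lambda>k. (I k, real k * h)) ` {0..<Suc N}"
    by (simp add: P_def del: upt_Suc)
  have "tagged_borel_partition d P"
    unfolding tagged_borel_partition_def
  proof (intro conjI allI impI)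
    show "\<forall>(S, x)\<in>set P. S \<in> borel02 \<and> x \<in> S \<and> diameter S < d"
      using cell by (simp add: set_P less_Suc_eq_le)
    show "fst (P ! i) \<inter> fst (P ! j) = {}" if "i < length P" "j < length P" "i \<noteq> j" for i j
    proof -
      have "fst (P ! i) = I i" "fst (P ! j) = I j"
        using that by (simp_all add: P_def del: upt_Suc)
      then show ?thesis
        using \<open>i \<noteq> j\<close> disjoint[of i j] disjoint[of j i] by (cases "i < j") (auto simp: Int_commute)
    qed
    have "I k \<subseteq> {0..2}" for k
      by (simp add: I_def)
    then show "\<Union> (fst ` set P) = {0..2}"
      using cover by (auto simp: set_P image_image)
  qed
  then show ?thesis ..
qed

lemma has_mintegral_closed:
  assumes I: "has_mintegral M f I" and "closed C"
    and C: "\<And>d P. tagged_borel_partition d P \<Longrightarrow> riemann_sum M f P \<in> C"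
  shows "I \<in> C"
proof (rule ccontr)
  assume "I \<notin> C"
  then obtain e where "e > 0" and e: "ball I e \<subseteq> - C"
    using \<open>closed C\<close> open_contains_ball[of "- C"] by (auto simp: closed_def)
  then obtain d where "d > 0"
    and d: "\<And>P. tagged_borel_partition d P \<Longrightarrow> norm (riemann_sum M f P - I) < e"
    using I unfolding has_mintegral_iff_riemann_sum by blast
  obtain P where P: "tagged_borel_partition d P"
    using tagged_borel_partition_exists[OF \<open>d > 0\<close>] by blast
  have "riemann_sum M f P \<in> ball I e"
    using d[OF P] by (simp add: dist_norm norm_minus_commute)
  then show False
    using e C[OF P] by blast
qed

section \<open>Non-negative matrices\<close>

lemma nonneg_mat_0: "nonneg_mat 0"
  by (simp add: nonneg_mat_def)

lemma nonneg_mat_add: "nonneg_mat S \<Longrightarrow> nonneg_mat T \<Longrightarrow> nonneg_mat (S + T)"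
  unfolding nonneg_mat_def by (simp add: distrib_right sum.distrib add_nonneg_nonneg)

lemma nonneg_mat_scaleR:
  assumes "nonneg_mat S" "0 \<le> c"
  shows "nonneg_mat (c *\<^sub>R S)"
proof -
  have "(\<Sum>p\<in>UNIV. \<Sum>q\<in>UNIV. (c *\<^sub>R S) $ p $ q * \<xi> $ p * cnj (\<xi> $ q))
      = c *\<^sub>R (\<Sum>p\<in>UNIV. \<Sum>q\<in>UNIV. S $ p $ q * \<xi> $ p * cnj (\<xi> $ q))" for \<xi> :: "complex^2"
    by (simp add: scaleR_sum_right)
  then show ?thesis
    using assms unfolding nonneg_mat_def by simp
qed

lemma closed_nonneg_mat: "closed {S. nonneg_mat S}"
  unfolding nonneg_mat_def
  by (intro closed_Collect_all closed_Collect_conj closed_Collect_eq closed_Collect_le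
      continuous_intros continuous_on_component continuous_on_id)

lemma riemann_sum_nonneg_mat:
  assumes M: "nonneg_measure M" and P: "\<forall>(S, x)\<in>set P. S \<in> borel02 \<and> x \<in> S"
    and f: "\<And>x. x \<in> {0..2} \<Longrightarrow> 0 \<le> f x"
  shows "nonneg_mat (riemann_sum M f P)"
  using P
proof (induction P)
  case Nil
  then show ?case
    by (simp add: riemann_sum_def nonneg_mat_0)
next
  case (Cons SX P)
  obtain S x where SX: "SX = (S, x)"
    by fastforce
  with Cons.prems have "S \<in> borel02" "x \<in> S"
    by auto
  then have "nonneg_mat (M S)" "0 \<le> f x"
    using M f by (auto simp: nonneg_measure_def borel02_def)
  then have "nonneg_mat (f x *\<^sub>R M S)"
    by (rule nonneg_mat_scaleR)
  moreover have "nonneg_mat (riemann_sum M f P)"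
    using Cons by simp
  ultimately show ?case
    by (simp add: riemann_sum_def SX nonneg_mat_add)
qed

lemma has_mintegral_nonneg_mat:
  assumes "nonneg_measure M" and I: "has_mintegral M f I" and "\<And>x. x \<in> {0..2} \<Longrightarrow> 0 \<le> f x"
  shows "nonneg_mat I"
proof -
  have "riemann_sum M f P \<in> {S. nonneg_mat S}" if "tagged_borel_partition d P" for d P
  proof -
    have "\<forall>(S, x)\<in>set P. S \<in> borel02 \<and> x \<in> S"
      using that unfolding tagged_borel_partition_def by auto
    then show ?thesis
      using riemann_sum_nonneg_mat assms(1,3) by blast
  qed
  then show ?thesis
    using has_mintegral_closed[OF I closed_nonneg_mat] by blast
qed

lemma nonneg_mat_det_nonneg:
  assumes "hermitian2 S" and "nonneg_mat S" and "0 < Re (S $ 1 $ 1)"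
  shows "0 \<le> Re (det S)"
proof -
  have h11: "cnj (S $ 1 $ 1) = S $ 1 $ 1" and h21: "cnj (S $ 2 $ 1) = S $ 1 $ 2"
    using assms(1)[unfolded hermitian2_def, rule_format, of 1 1]
      assms(1)[unfolded hermitian2_def, rule_format, of 1 2] by simp_all
  then have "Im (S $ 1 $ 1) = 0"
    by (simp add: complex_eq_iff)
  \<comment> \<open>at this vector the quadratic form of S equals S11 * det S\<close>
  define \<xi> :: "complex^2" where "\<xi> = (\<chi> i. if i = 1 then S $ 2 $ 1 else - S $ 1 $ 1)"
  have "0 \<le> Re (\<Sum>p\<in>UNIV. \<Sum>q\<in>UNIV. S $ p $ q * \<xi> $ p * cnj (\<xi> $ q))"
    using assms(2) unfolding nonneg_mat_def by blast
  also have "(\<Sum>p\<in>UNIV. \<Sum>q\<in>UNIV. S $ p $ q * \<xi> $ p * cnj (\<xi> $ q)) = S $ 1 $ 1 * det S"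
    by (simp add: \<xi>_def sum_2 det_2 h11 h21 algebra_simps)
  finally show ?thesis
    using \<open>Im (S $ 1 $ 1) = 0\<close> assms(3) by (simp add: zero_le_mult_iff)
qed

lemma hermitian2_matD: "hermitian2 matD"
  by (simp add: hermitian2_def matD_def forall_2)

lemma det_matD: "det matD = complex_of_real ((6 - exp 2 - exp (-2)) / 4)"
proof -
  have "det matD = complex_of_real (exp 1 * exp (-1) - ((exp 1 - exp (-1)) / 2)\<^sup>2)"
    by (simp add: det_2 matD_def power2_eq_square)
  moreover have "exp 1 * exp (-1) = (1::real)" "exp 2 = exp 1 * (exp 1::real)"
    "exp (-2) = exp (-1) * (exp (-1)::real)"
    by (simp_all flip: exp_add)
  then have "exp 1 * exp (-1) - ((exp 1 - exp (-1)) / 2)\<^sup>2 = (6 - exp 2 - exp (-2)) / (4::real)"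
    by (simp add: power2_eq_square field_simps)
  ultimately show ?thesis
    by simp
qed

lemma exp_2_plus_exp_minus_2_gt_6: "6 < exp 2 + exp (-2::real)"
proof -
  have "5 / 2 \<le> exp (1::real)"
    using exp_lower_Taylor_quadratic[of 1] by simp
  then have "5 / 2 * (5 / 2) \<le> exp 1 * exp (1::real)"
    by (intro mult_mono) auto
  moreover have "exp 1 * exp 1 = exp (2::real)"
    by (simp flip: exp_add)
  ultimately show ?thesis
    using exp_gt_zero[of "-2"] by linarith
qed

lemma not_nonneg_mat_matD: "\<not> nonneg_mat matD"
proof
  assume "nonneg_mat matD"
  moreover have "0 < Re (matD $ 1 $ 1)"
    by (simp add: matD_def)
  ultimately have "0 \<le> (6 - exp 2 - exp (-2)) / (4::real)"
    using nonneg_mat_det_nonneg[OF hermitian2_matD] by (simp add: det_matD)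
  then show False
    using exp_2_plus_exp_minus_2_gt_6 by simp
qed

theorem mainTheorem2:
  fixes M :: "real set \<Rightarrow> cmat2"
  assumes "H2_regular_borel_measure M"
    and "\<forall>t::real. has_mintegral M (\<lambda>x. exp (t * x)) (mexp (t *\<^sub>R matA + matB))"
  shows "((\<lambda>t::real. mexp (t *\<^sub>R matA + matB)) has_vector_derivative matD) (at 0)
    \<and> has_mintegral M (\<lambda>x. x) matD
    \<and> det matD = complex_of_real ((6 - exp 2 - exp (-2)) / 4)
    \<and> (6 - exp 2 - exp (-2)) / 4 < (0::real)
    \<and> \<not> nonneg_measure M"
proof -
  obtain K where K: "variation_bounded02 M K"
    using countably_additive_borel02_variation_bounded
      H2_regular_borel_measure_countably_additive[OF assms(1)] by blast
  have integral: "has_mintegral M (\<lambda>x. x) matD"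
    using has_mintegral_id_from_exp_derivative[OF K _ mexp_matA_matB_has_derivative_0] assms(2)
    by blast
  have "\<not> nonneg_measure M"
    using has_mintegral_nonneg_mat[OF _ integral] not_nonneg_mat_matD by auto
  then show ?thesis
    using mexp_matA_matB_has_derivative_0 integral det_matD exp_2_plus_exp_minus_2_gt_6 by simp
qed

end
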